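(* For all integers $a,b,c,d\in\mathbb Z$, if $a+b=c+d$ then $(\mathbb Z,+)\models a:b::c:d$.
   Context: $(\mathbb Z,+)$ is the structure with universe $\mathbb Z$ and one binary function symbol interpreted as addition. The analogical proportion relation: a c-formula is a conjunctive formula (built from atomic formulas using only $\wedge,\exists,\forall$; parameters from the universe allowed) with free variables exactly $x,y$ whose dependency graph (vertices: its variables; edge $\{w,z\}$ iff $w,z$ occur in a common atomic subformula) is connected. $\uparrow_{\mathfrak A}(a\to b)=\{\alpha:\mathfrak A\models\alpha(a,b)\}$, $\uparrow_{\mathfrak A}(a\to b:\cdot\, c\to d)=\uparrow_{\mathfrak A}(a\to b)\cap\uparrow_{\mathfrak A}(c\to d)$. A c-formula is trivial iff it is in $\uparrow_{\mathfrak A}(a\to b:\cdot\, c\to d)$ for all $a,b,c,d$; $\emptyset_{\mathfrak A}$ is the set of these. $\mathfrak A\models a\to b:\cdot\, c\to d$ iff either $\uparrow_{\mathfrak A}(a\to b)\cup\uparrow_{\mathfrak A}(c\to d)$ consists only of trivial formulas, or $\uparrow_{\mathfrak A}(a\to b:\cdot\, c\to d)$ contains a non-trivial formula and for every $d'$, $\emptyset_{\mathfrak A}\subsetneq\uparrow(a\to b:\cdot\, c\to d)\subseteq\uparrow(a\to b:\cdot\, c\to d')$ implies $\emptyset_{\mathfrak A}\subsetneq\uparrow(a\to b:\cdot\, c\to d')\subseteq\uparrow(a\to b:\cdot\, c\to d)$. $\mathfrak A\models a:b::c:d$ iff $\mathfrak A\models a\to b:\cdot\, c\to d$, $b\to a:\cdot\,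 d\to c$, $c\to d:\cdot\, a\to b$ and $d\to c:\cdot\, b\to a$. *)

theory Defs
  imports Main
begin

datatype 'a tm = Var nat | Par 'a | App "'a tm" "'a tm"
  (* Par: parameters (constants naming universe elements); App: the binary function symbol *)

datatype 'a fm = Eq "'a tm" "'a tm" | Conj "'a fm" "'a fm" | Ex nat "'a fm" | All nat "'a fm"

primrec tvars :: "'a tm \<Rightarrow> nat set" where
  "tvars (Var n) = {n}"
| "tvars (Par c) = {}"
| "tvars (App s t) = tvars s \<union> tvars t"

primrec tval :: "('a \<Rightarrow> 'a \<Rightarrow> 'a) \<Rightarrow> (nat \<Rightarrow> 'a) \<Rightarrow> 'a tm \<Rightarrow> 'a" where
  "tval f e (Var n) = e n"
| "tval f e (Par c) = c"
| "tval f e (App s t) = f (tval f e s) (tval f e t)"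

primrec sat :: "('a \<Rightarrow> 'a \<Rightarrow> 'a) \<Rightarrow> (nat \<Rightarrow> 'a) \<Rightarrow> 'a fm \<Rightarrow> bool" where
  "sat f e (Eq s t) = (tval f e s = tval f e t)"
| "sat f e (Conj p q) = (sat f e p \<and> sat f e q)"
| "sat f e (Ex n p) = (\<exists>v. sat f (e(n := v)) p)"
| "sat f e (All n p) = (\<forall>v. sat f (e(n := v)) p)"

primrec fvars :: "'a fm \<Rightarrow> nat set" where
  "fvars (Eq s t) = tvars s \<union> tvars t"
| "fvars (Conj p q) = fvars p \<union> fvars q"
| "fvars (Ex n p) = fvars p - {n}"
| "fvars (All n p) = fvars p - {n}"

primrec vars :: "'a fm \<Rightarrow> nat set" where
  "vars (Eq s t) = tvars s \<union> tvars t"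
| "vars (Conj p q) = vars p \<union> vars q"
| "vars (Ex n p) = insert n (vars p)"
| "vars (All n p) = insert n (vars p)"

primrec atoms :: "'a fm \<Rightarrow> ('a tm \<times> 'a tm) set" where
  "atoms (Eq s t) = {(s, t)}"
| "atoms (Conj p q) = atoms p \<union> atoms q"
| "atoms (Ex n p) = atoms p"
| "atoms (All n p) = atoms p"

definition dep_edge :: "'a fm \<Rightarrow> nat \<Rightarrow> nat \<Rightarrow> bool" where
  "dep_edge p w z \<longleftrightarrow> w \<noteq> z \<and> (\<exists>(s, t) \<in> atoms p. w \<in> tvars s \<union> tvars t \<and> z \<in> tvars s \<union> tvars t)"

definition dep_connected :: "'a fm \<Rightarrow> bool" where
  "dep_connected p \<longleftrightarrow> (\<forall>w \<in> vars p. \<forall>z \<in> vars p. (dep_edge p)\<^sup>*\<^sup>* w z)"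

text \<open>The distinguished free variables x and y are Var 0 and Var 1.\<close>
definition cform :: "'a fm \<Rightarrow> bool" where
  "cform p \<longleftrightarrow> fvars p = {0, 1} \<and> dep_connected p"

definition holds2 :: "('a \<Rightarrow> 'a \<Rightarrow> 'a) \<Rightarrow> 'a fm \<Rightarrow> 'a \<Rightarrow> 'a \<Rightarrow> bool" where
  "holds2 f p a b \<longleftrightarrow> sat f ((\<lambda>_. a)(0 := a, 1 := b)) p"

definition up :: "('a \<Rightarrow> 'a \<Rightarrow> 'a) \<Rightarrow> 'a \<Rightarrow> 'a \<Rightarrow> 'a fm set" where
  "up f a b = {p. cform p \<and> holds2 f p a b}"

definition up2 :: "('a \<Rightarrow> 'a \<Rightarrow> 'a) \<Rightarrow> 'a \<Rightarrow> 'a \<Rightarrow> 'a \<Rightarrow> 'a \<Rightarrow> 'a fm set" where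
  "up2 f a b c d = up f a b \<inter> up f c d"

definition trivial_set :: "('a \<Rightarrow> 'a \<Rightarrow> 'a) \<Rightarrow> 'a fm set" where
  "trivial_set f = {p. cform p \<and> (\<forall>a b c d. p \<in> up2 f a b c d)}"

definition arrow_prop :: "('a \<Rightarrow> 'a \<Rightarrow> 'a) \<Rightarrow> 'a \<Rightarrow> 'a \<Rightarrow> 'a \<Rightarrow> 'a \<Rightarrow> bool" where
  "arrow_prop f a b c d \<longleftrightarrow>
     (up f a b \<union> up f c d \<subseteq> trivial_set f)
   \<or> (\<not> up2 f a b c d \<subseteq> trivial_set f \<and>
      (\<forall>d'. (trivial_set f \<subset> up2 f a b c d \<and> up2 f a b c d \<subseteq> up2 f a b c d')
            \<longrightarrow> (trivial_set f \<subset> up2 f a b c d' \<and> up2 f a b c d' \<subseteq> up2 f a b c d)))"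

definition analogy :: "('a \<Rightarrow> 'a \<Rightarrow> 'a) \<Rightarrow> 'a \<Rightarrow> 'a \<Rightarrow> 'a \<Rightarrow> 'a \<Rightarrow> bool" where
  "analogy f a b c d \<longleftrightarrow> arrow_prop f a b c d \<and> arrow_prop f b a d c
     \<and> arrow_prop f c d a b \<and> arrow_prop f d c b a"

end

theory Submission
  imports Defs
begin

text \<open>The c-formula \<open>x + y = a + b\<close> holds for \<open>(a, b)\<close> and \<open>(c, d)\<close>, is non-trivial, and, by
  cancellation, holds for \<open>(c, d')\<close> only if \<open>d' = d\<close>. So no competing \<open>d'\<close> can share all
  non-trivial formulas of \<open>(a, b)\<close> and \<open>(c, d)\<close> unless it is \<open>d\<close> itself, which makes each of the
  four arrow proportions hold; commutativity lets the same formula serve all four.\<close>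

definition eq_const_fm :: "'a \<Rightarrow> 'a fm" where
  "eq_const_fm s = Eq (App (Var 0) (Var 1)) (Par s)"

lemma holds2_eq_const_fm: "holds2 f (eq_const_fm s) x y \<longleftrightarrow> f x y = s"
  by (simp add: holds2_def eq_const_fm_def)

lemma cform_eq_const_fm: "cform (eq_const_fm s)"
proof -
  have "vars (eq_const_fm s) = {0, 1}" and "fvars (eq_const_fm s) = {0, 1}"
    by (auto simp: eq_const_fm_def)
  moreover have "dep_edge (eq_const_fm s) 0 1" and "dep_edge (eq_const_fm s) 1 0"
    by (auto simp: dep_edge_def eq_const_fm_def)
  ultimately show ?thesis
    by (auto simp: cform_def dep_connected_def)
qed

lemma up2_eq_const_fm_iff:
  "eq_const_fm s \<in> up2 f a b c d \<longleftrightarrow> f a b = s \<and> f c d = s"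
  by (simp add: up2_def up_def cform_eq_const_fm holds2_eq_const_fm)

lemma eq_const_fm_notin_trivial_set:
  assumes "f x y \<noteq> s"
  shows "eq_const_fm s \<notin> trivial_set f"
  using assms up2_eq_const_fm_iff[of s f x y x y] by (auto simp: trivial_set_def)

lemma arrow_prop_if_determining_formula:
  assumes "p \<in> up2 f a b c d" and "p \<notin> trivial_set f"
    and "\<And>d'. p \<in> up2 f a b c d' \<Longrightarrow> d' = d"
  shows "arrow_prop f a b c d"
  unfolding arrow_prop_def
proof (rule disjI2, rule conjI)
  show "\<not> up2 f a b c d \<subseteq> trivial_set f"
    using assms(1,2) by blast
  show "\<forall>d'. trivial_set f \<subset> up2 f a b c d \<and> up2 f a b c d \<subseteq> up2 f a b c d'
          \<longrightarrow> trivial_set f \<subset> up2 f a b c d' \<and> up2 f a b c d' \<subseteq> up2 f a b c d"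
  proof (intro allI impI)
    fix d'
    assume "trivial_set f \<subset> up2 f a b c d \<and> up2 f a b c d \<subseteq> up2 f a b c d'"
    moreover from this have "d' = d"
      using assms(1,3) by (meson subsetD)
    ultimately show "trivial_set f \<subset> up2 f a b c d' \<and> up2 f a b c d' \<subseteq> up2 f a b c d"
      by simp
  qed
qed

lemma arrow_prop_if_cancel:
  fixes f :: "'a \<Rightarrow> 'a \<Rightarrow> 'a" and u v :: 'a
  assumes cancel: "\<And>x y y'. f x y = f x y' \<Longrightarrow> y = y'"
    and "u \<noteq> v" and "f a b = f c d"
  shows "arrow_prop f a b c d"
proof (rule arrow_prop_if_determining_formula)
  show "eq_const_fm (f a b) \<in> up2 f a b c d"
    using assms(3) by (simp add: up2_eq_const_fm_iff)
  have "f a u \<noteq> f a b \<or> f a v \<noteq> f a b"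
    using assms(2) cancel by metis
  then show "eq_const_fm (f a b) \<notin> trivial_set f"
    using eq_const_fm_notin_trivial_set by metis
  show "d' = d" if "eq_const_fm (f a b) \<in> up2 f a b c d'" for d'
    using that assms(3) cancel by (simp add: up2_eq_const_fm_iff)
qed

lemma analogy_if_comm_cancel:
  fixes f :: "'a \<Rightarrow> 'a \<Rightarrow> 'a" and u v :: 'a
  assumes "\<And>x y. f x y = f y x"
    and cancel: "\<And>x y y'. f x y = f x y' \<Longrightarrow> y = y'"
    and "u \<noteq> v" and "f a b = f c d"
  shows "analogy f a b c d"
  using assms arrow_prop_if_cancel[OF cancel \<open>u \<noteq> v\<close>]
  unfolding analogy_def by metis

theorem corollary12:
  fixes a b c d :: int
  assumes "a + b = c + d"
  shows "analogy (+) a b c d"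
  by (rule analogy_if_comm_cancel[of "(+)" "0::int" 1]) (simp_all add: assms)

end
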